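(* Let $n\geq 2$. The structure $(\mathbb{Q}^n,<,<_{\mathrm{lex}_1},\ldots,<_{\mathrm{lex}_n})$ is not ultrahomogeneous.
   Context: On $\mathbb{Q}^n$, $<$ is the product order ($\mathbf{a}<\mathbf{b}$ iff $a_i\leq b_i$ for all $i$ and $\mathbf{a}\neq\mathbf{b}$). For $i\leq n$, let $\sigma_i$ be the cyclic permutation of $\{1,\ldots,n\}$ listing $i,i+1,\ldots,n,1,\ldots,i-1$ (so $\sigma_i(1)=i$), and define the $i$th lexicographic order by $\mathbf{a}<_{\mathrm{lex}_i}\mathbf{b}$ iff there is $k\leq n$ with $a_{\sigma_i(j)}=b_{\sigma_i(j)}$ for all $j<k$ and $a_{\sigma_i(k)}<b_{\sigma_i(k)}$. A structure is ultrahomogeneous if every isomorphism between finite substructures (preserving and reflecting all relations) extends to an automorphism. *)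

theory Defs
  imports Complex_Main
begin

text \<open>Q^n is represented by functions nat => rat vanishing at all indices >= n;
coordinates are indexed 0..n-1 (paper: 1..n).\<close>

definition Qn :: "nat \<Rightarrow> (nat \<Rightarrow> rat) set" where
  "Qn n = {a. \<forall>i\<ge>n. a i = 0}"

definition prod_less :: "nat \<Rightarrow> (nat \<Rightarrow> rat) \<Rightarrow> (nat \<Rightarrow> rat) \<Rightarrow> bool" where
  "prod_less n a b \<longleftrightarrow> (\<forall>i<n. a i \<le> b i) \<and> a \<noteq> b"

text \<open>The i-th lexicographic order (0 <= i < n): coordinates compared in the
cyclic order i, i+1, ..., n-1, 0, ..., i-1, i.e. sigma_i(j) = (i + j) mod n
for j = 0..n-1.\<close>
definition lex_less :: "nat \<Rightarrow> nat \<Rightarrow> (nat \<Rightarrow> rat) \<Rightarrow> (nat \<Rightarrow> rat) \<Rightarrow> bool" where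
  "lex_less n i a b \<longleftrightarrow>
     (\<exists>k<n. (\<forall>j<k. a ((i + j) mod n) = b ((i + j) mod n)) \<and>
            a ((i + k) mod n) < b ((i + k) mod n))"

definition rel :: "nat \<Rightarrow> nat option \<Rightarrow> (nat \<Rightarrow> rat) \<Rightarrow> (nat \<Rightarrow> rat) \<Rightarrow> bool" where
  "rel n r = (case r of None \<Rightarrow> prod_less n | Some i \<Rightarrow> lex_less n i)"

definition rel_idx :: "nat \<Rightarrow> nat option set" where
  "rel_idx n = insert None (Some ` {..<n})"

definition pres_refl :: "nat \<Rightarrow> ((nat \<Rightarrow> rat) \<Rightarrow> (nat \<Rightarrow> rat)) \<Rightarrow> (nat \<Rightarrow> rat) set \<Rightarrow> bool" where
  "pres_refl n f A \<longleftrightarrow>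
     (\<forall>r\<in>rel_idx n. \<forall>a\<in>A. \<forall>b\<in>A. rel n r (f a) (f b) \<longleftrightarrow> rel n r a b)"

definition ultrahomogeneous_Qn :: "nat \<Rightarrow> bool" where
  "ultrahomogeneous_Qn n \<longleftrightarrow>
     (\<forall>A f. finite A \<and> A \<subseteq> Qn n \<and> f ` A \<subseteq> Qn n \<and> inj_on f A \<and> pres_refl n f A \<longrightarrow>
        (\<exists>g. bij_betw g (Qn n) (Qn n) \<and> pres_refl n g (Qn n) \<and> (\<forall>a\<in>A. g a = f a)))"

end

theory Submission
  imports Defs
begin

text \<open>
The map sending 0 to 0 and e0 + e1 to e0 is an isomorphism of two-element substructures,
since both pairs are comparable in the product order and hence in every lexicographic order.
Suppose it extends to an automorphism g and take c = (2, 1/2, 0, ..., 0). In the lexicographic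
order starting at coordinate 1, c lies strictly between 0 and e0 + e1, so g c lies strictly
between 0 and e0. As 0 and e0 differ only in coordinate 0, which this order compares last,
g c = (t, 0, ..., 0) with t < 1. But e0 + e1 is below c in the lexicographic order starting at
coordinate 0, hence e0 is below g c there, i.e. t \<ge> 1.
\<close>

lemma lex_less_imp_le_after_common_prefix:
  assumes "lex_less n i x y" and "\<forall>j<m. x ((i + j) mod n) = y ((i + j) mod n)"
  shows "x ((i + m) mod n) \<le> y ((i + m) mod n)"
proof -
  obtain k where "k < n" "\<forall>j<k. x ((i + j) mod n) = y ((i + j) mod n)"
    "x ((i + k) mod n) < y ((i + k) mod n)"
    using assms(1) unfolding lex_less_def by blast
  then show ?thesis
    using assms(2) by (cases k m rule: linorder_cases) auto
qed

lemma lex_less_last_coordinate: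
  assumes "lex_less n i x y" and "\<forall>j<m. x ((i + j) mod n) = y ((i + j) mod n)" and "Suc m = n"
  shows "x ((i + m) mod n) < y ((i + m) mod n)"
proof -
  obtain k where "k < n" "x ((i + k) mod n) < y ((i + k) mod n)"
    using assms(1) unfolding lex_less_def by blast
  moreover have "k = m"
    using calculation assms(2,3) by (metis less_Suc_eq order.irrefl)
  ultimately show ?thesis by simp
qed

lemma lex_less_between_common_prefix:
  assumes "lex_less n i x y" and "lex_less n i y z"
    and "\<forall>j<m. x ((i + j) mod n) = z ((i + j) mod n)"
  shows "\<forall>j<m. y ((i + j) mod n) = x ((i + j) mod n)"
  using assms(3)
proof (induction m)
  case 0
  then show ?case by simp
next
  case (Suc m)
  then have prefix: "\<forall>j<m. y ((i + j) mod n) = x ((i + j) mod n)"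
    by simp
  have "x ((i + m) mod n) \<le> y ((i + m) mod n)"
    using lex_less_imp_le_after_common_prefix[OF assms(1)] prefix by simp
  moreover have "y ((i + m) mod n) \<le> z ((i + m) mod n)"
    using lex_less_imp_le_after_common_prefix[OF assms(2)] prefix Suc.prems by simp
  ultimately have "y ((i + m) mod n) = x ((i + m) mod n)"
    using Suc.prems by simp
  then show ?case
    using prefix less_Suc_eq by auto
qed

lemma lex_less_asym:
  assumes "lex_less n i x y"
  shows "\<not> lex_less n i y x"
proof
  assume "lex_less n i y x"
  then have "\<forall>j<n. y ((i + j) mod n) = x ((i + j) mod n)"
    using lex_less_between_common_prefix[OF assms] by blast
  with assms show False
    unfolding lex_less_def by fastforce
qed

lemma prod_less_imp_lex_less:
  assumes "i < n" and "x \<in> Qn n" and "y \<in> Qn n" and "prod_less n x y"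
  shows "lex_less n i x y"
proof -
  define differ where "differ k \<longleftrightarrow> x ((i + k) mod n) \<noteq> y ((i + k) mod n)" for k
  obtain j0 where j0_differs: "x j0 \<noteq> y j0"
    using assms(4) unfolding prod_less_def by (auto simp: fun_eq_iff)
  have "j0 < n"
  proof (rule ccontr)
    assume "\<not> j0 < n"
    then show False
      using j0_differs assms(2,3) by (simp add: Qn_def)
  qed
  have "(i + (j0 + n - i) mod n) mod n = (i + (j0 + n - i)) mod n"
    by (simp add: mod_add_right_eq)
  also have "\<dots> = j0"
    using assms(1) \<open>j0 < n\<close> by simp
  finally have "differ ((j0 + n - i) mod n)"
    unfolding differ_def using j0_differs by simp
  then obtain k where k: "differ k" "\<forall>j<k. \<not> differ j"
    using exists_least_iff[of differ] by blast
  have "k \<le> (j0 + n - i) mod n"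
    using k(2) \<open>differ ((j0 + n - i) mod n)\<close> by (meson not_le)
  also have "\<dots> < n"
    using \<open>j0 < n\<close> by simp
  finally have "k < n" .
  moreover have "x ((i + k) mod n) \<le> y ((i + k) mod n)"
    using assms(1,4) unfolding prod_less_def by simp
  ultimately show ?thesis
    using k unfolding lex_less_def differ_def by (auto intro!: exI[of _ k])
qed

lemma rel_of_prod_less:
  assumes "r \<in> rel_idx n" and "x \<in> Qn n" and "y \<in> Qn n" and "prod_less n x y"
  shows "rel n r x y"
  using assms prod_less_imp_lex_less unfolding rel_idx_def rel_def by auto

lemma rel_asym:
  assumes "x \<in> Qn n" and "y \<in> Qn n" and "rel n r x y"
  shows "\<not> rel n r y x"
proof (cases r)
  case None
  have "x = y" if "prod_less n x y" "prod_less n y x"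
  proof
    fix j
    show "x j = y j"
    proof (cases "j < n")
      case True
      then have "x j \<le> y j" "y j \<le> x j"
        using that unfolding prod_less_def by simp_all
      then show ?thesis by simp
    next
      case False
      then show ?thesis
        using assms(1,2) unfolding Qn_def by simp
    qed
  qed
  then show ?thesis
    using assms(3) unfolding rel_def None by (auto simp: prod_less_def)
next
  case (Some i)
  then show ?thesis
    using assms(3) lex_less_asym unfolding rel_def by auto
qed

lemma pres_refl_two_points:
  assumes "{a, b, f a, f b} \<subseteq> Qn n" and "prod_less n a b" and "prod_less n (f a) (f b)"
  shows "pres_refl n f {a, b}"
proof -
  have "rel n r (f u) (f v) \<longleftrightarrow> rel n r u v"
    if "r \<in> rel_idx n" "u \<in> {a, b}" "v \<in> {a, b}" for r u v
  proof -
    have "rel n r a b" "rel n r (f a) (f b)"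
      using assms that(1) rel_of_prod_less by auto
    moreover have "\<not> rel n r b a" "\<not> rel n r (f b) (f a)"
      using calculation assms(1) rel_asym by simp_all
    moreover have "\<not> rel n r x x" if "x \<in> Qn n" for x
      using rel_asym[OF that that] by blast
    ultimately show ?thesis
      using that(2,3) assms(1) by auto
  qed
  then show ?thesis
    unfolding pres_refl_def by blast
qed

lemma pres_refl_lex_less:
  assumes "pres_refl n g A" and "i < n" and "a \<in> A" and "b \<in> A"
  shows "lex_less n i (g a) (g b) \<longleftrightarrow> lex_less n i a b"
  using assms unfolding pres_refl_def rel_idx_def rel_def by auto

lemma lex_less_1_between_zero_and_unit_0:
  assumes "n \<ge> 2"
    and "lex_less n 1 (\<lambda>_. 0) d" and "lex_less n 1 d (\<lambda>j. if j = 0 then 1 else 0)"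
  shows "d 0 < 1"
proof -
  define e :: "nat \<Rightarrow> rat" where "e = (\<lambda>j. if j = 0 then 1 else 0)"
  have shift: "(1 + j) mod n = 1 + j" if "j < n - 1" for j
    using that by simp
  have "\<forall>j<n - 1. (\<lambda>_. 0) ((1 + j) mod n) = e ((1 + j) mod n)"
    using shift unfolding e_def by simp
  then have "\<forall>j<n - 1. d ((1 + j) mod n) = e ((1 + j) mod n)"
    using lex_less_between_common_prefix[OF assms(2,3)[folded e_def], of "n - 1"] by metis
  then have "d ((1 + (n - 1)) mod n) < e ((1 + (n - 1)) mod n)"
    by (rule lex_less_last_coordinate[OF assms(3)[folded e_def]]) (use assms(1) in simp)
  then show ?thesis
    using assms(1) unfolding e_def by simp
qed

lemma ultrahomogeneous_Qn_extend_prod_less_pair: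
  assumes "ultrahomogeneous_Qn n" and "{a, b, a', b'} \<subseteq> Qn n"
    and "prod_less n a b" and "prod_less n a' b'"
  obtains g where "pres_refl n g (Qn n)" and "g a = a'" and "g b = b'"
proof -
  define f where "f x = (if x = a then a' else b')" for x
  have "a \<noteq> b" "a' \<noteq> b'"
    using assms(3,4) by (simp_all add: prod_less_def)
  then have f: "f a = a'" "f b = b'" "inj_on f {a, b}"
    unfolding f_def by auto
  have "pres_refl n f {a, b}"
    by (rule pres_refl_two_points) (use assms(2-4) f in simp_all)
  then have "finite {a, b} \<and> {a, b} \<subseteq> Qn n \<and> f ` {a, b} \<subseteq> Qn n \<and> inj_on f {a, b}
      \<and> pres_refl n f {a, b}"
    using assms(2) f by simp
  then obtain g where "pres_refl n g (Qn n)" "\<forall>x\<in>{a, b}. g x = f x"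
    using assms(1) unfolding ultrahomogeneous_Qn_def
    by (elim allE[of _ "{a, b}"] allE[of _ f] impE exE conjE) auto
  then show thesis
    using that f by simp
qed

theorem proposition3p4:
  fixes n :: nat
  assumes "n \<ge> 2"
  shows "\<not> ultrahomogeneous_Qn n"
proof
  assume "ultrahomogeneous_Qn n"
  define z :: "nat \<Rightarrow> rat" where "z = (\<lambda>_. 0)"
  define e :: "nat \<Rightarrow> rat" where "e = (\<lambda>j. if j = 0 then 1 else 0)"
  define b :: "nat \<Rightarrow> rat" where "b = (\<lambda>j. if j < 2 then 1 else 0)"
  define c :: "nat \<Rightarrow> rat" where "c = (\<lambda>j. if j = 0 then 2 else if j = 1 then 1/2 else 0)"
  have points: "z \<in> Qn n" "e \<in> Qn n" "b \<in> Qn n" "c \<in> Qn n"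
    unfolding Qn_def z_def e_def b_def c_def using assms by auto
  have "z \<noteq> b" "z \<noteq> e"
    unfolding z_def b_def e_def by (auto dest: fun_cong[of _ _ 0])
  then have "prod_less n z b" "prod_less n z e"
    unfolding prod_less_def by (simp_all add: z_def b_def e_def)
  moreover have "{z, b, z, e} \<subseteq> Qn n"
    using points by simp
  ultimately obtain g where g: "pres_refl n g (Qn n)" "g z = z" "g b = e"
    using ultrahomogeneous_Qn_extend_prod_less_pair[OF \<open>ultrahomogeneous_Qn n\<close>] by blast
  have "lex_less n 1 z c" "lex_less n 1 c b" "lex_less n 0 b c"
    using assms unfolding lex_less_def by (auto intro!: exI[of _ 0] simp: z_def b_def c_def)
  moreover have "1 < n" "0 < n"
    using assms by simp_all
  ultimately have "lex_less n 1 z (g c)" "lex_less n 1 (g c) e" "lex_less n 0 e (g c)"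
    using pres_refl_lex_less[OF g(1)] points g(2,3) by metis+
  then have "g c 0 < 1" and "1 \<le> g c 0"
    using lex_less_1_between_zero_and_unit_0[OF assms]
      lex_less_imp_le_after_common_prefix[of n 0 e "g c" 0]
    unfolding z_def e_def by auto
  then show False by simp
qed

end
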